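(* Let $n_1\geq n_2\geq 2$ be integers and let $\delta=1$ if $n_1$ is even and $n_2$ is odd, and $\delta=0$ otherwise. Define $f:[n_1]\times[n_2]\to[n_1n_2]$ by $$f(i,j)=\begin{cases}(i-1)n_2+j & i \text{ odd},\ j\text{ odd},\\ (i-1)n_2+(n_2+1-j) & i\text{ even},\ j\text{ even},\\ (n_1-i)n_2+j+\delta & i\text{ odd},\ j\text{ even},\\ (n_1-i)n_2+(n_2+1-j+\delta) & i\text{ even},\ j\text{ odd}.\end{cases}$$ Then $f$ is a $Q_2$-magic vertex labeling of $\textsc{Grid}(n_1,n_2)$ with $Q_2$-magic sum $2(n_1n_2+1)$ if $n_1$ is odd or $n_2$ is even, and $2(n_1n_2+2)$ if $n_1$ is even and $n_2$ is odd.
   Context: $[k]=\{1,\ldots,k\}$. $\textsc{Grid}(n_1,n_2)$ is the graph with vertex set $[n_1]\times[n_2]$ in which $(i,j)$ and $(i',j')$ are adjacent iff $|i-i'|+|j-j'|=1$. $Q_2$ is the 4-cycle $\textsc{Grid}(2,2)$. A bijection $f:V\to\{1,\ldots,|V|\}$ on the vertex set of a graph $G=(V,E)$ is an $H$-magic vertex labeling if there is a constant $c$ (the $H$-magic sum) with $\sum_{v\in V(H')}f(v)=c$ for every subgraph $H'\subseteq G$ isomorphic to $H$. *)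

theory Defs
  imports Main
begin

text \<open>A simple graph is a pair (V, E) of a vertex set and a set of 2-element edges.\<close>
type_synonym 'a graph = "'a set \<times> 'a set set"

definition grid :: "nat \<Rightarrow> nat \<Rightarrow> (nat \<times> nat) graph" where
  "grid n1 n2 = ({1..n1} \<times> {1..n2},
     {{u, v} | u v. u \<in> {1..n1} \<times> {1..n2} \<and> v \<in> {1..n1} \<times> {1..n2} \<and>
        \<bar>int (fst u) - int (fst v)\<bar> + \<bar>int (snd u) - int (snd v)\<bar> = 1})"

definition Q2 :: "(nat \<times> nat) graph" where
  "Q2 = grid 2 2"

definition subgraph :: "'a graph \<Rightarrow> 'a graph \<Rightarrow> bool" where
  "subgraph H G \<longleftrightarrow> fst H \<subseteq> fst G \<and> snd H \<subseteq> snd G \<and> (\<forall>e \<in> snd H. e \<subseteq> fst H)"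

definition graph_iso :: "'a graph \<Rightarrow> 'b graph \<Rightarrow> bool" where
  "graph_iso G H \<longleftrightarrow> (\<exists>h. bij_betw h (fst G) (fst H) \<and>
     (\<forall>x \<in> fst G. \<forall>y \<in> fst G. {x, y} \<in> snd G \<longleftrightarrow> {h x, h y} \<in> snd H))"

definition magic_labeling :: "'a graph \<Rightarrow> 'b graph \<Rightarrow> ('a \<Rightarrow> nat) \<Rightarrow> nat \<Rightarrow> bool" where
  "magic_labeling G H f c \<longleftrightarrow> bij_betw f (fst G) {1..card (fst G)} \<and>
     (\<forall>H'. subgraph H' G \<and> graph_iso H' H \<longrightarrow> (\<Sum>v \<in> fst H'. f v) = c)"

definition lab :: "nat \<Rightarrow> nat \<Rightarrow> nat \<times> nat \<Rightarrow> nat" where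
  "lab n1 n2 = (\<lambda>(i, j).
     (let \<delta> = (if even n1 \<and> odd n2 then 1 else 0) in
      if odd i \<and> odd j then (i - 1) * n2 + j
      else if even i \<and> even j then (i - 1) * n2 + (n2 + 1 - j)
      else if odd i \<and> even j then (n1 - i) * n2 + j + \<delta>
      else (n1 - i) * n2 + (n2 + 1 - j + \<delta>)))"

end

theory Submission
  imports Defs
begin

text \<open>
  Let \<open>s(i,j)\<close> be the position of cell \<open>(i,j)\<close> in the boustrophedon reading of row \<open>i\<close>
  (\<open>j\<close> in odd rows, \<open>n\<^sub>2 + 1 - j\<close> in even rows). Cells with \<open>i + j\<close> even are labelled
  \<open>(i - 1) n\<^sub>2 + s(i,j)\<close> and the others \<open>(n\<^sub>1 - i) n\<^sub>2 + s(i,j) + \<delta>\<close>. The first class receives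
  exactly the odd labels and the second the even ones, and within a class the label determines
  the row by division with remainder in \<open>{1..n\<^sub>2}\<close>, hence the cell; so \<open>f\<close> is injective, and a
  parity argument keeps the labels in \<open>{1..n\<^sub>1 n\<^sub>2}\<close>. A copy of \<open>Q\<^sub>2\<close> in the grid is a unit
  square, which has two cells of each class, and the four labels add up to \<open>2 (n\<^sub>1 n\<^sub>2 + 1 + \<delta>)\<close>.
\<close>

definition snake_offset :: "nat \<Rightarrow> nat \<Rightarrow> nat \<Rightarrow> nat" where
  "snake_offset n2 i j = (if odd i then j else n2 + 1 - j)"

definition lab_shift :: "nat \<Rightarrow> nat \<Rightarrow> nat" where
  "lab_shift n1 n2 = (if even n1 \<and> odd n2 then 1 else 0)"

lemma lab_eq_snake:
  "lab n1 n2 (i, j) =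
     (if even (i + j) then (i - 1) * n2 + snake_offset n2 i j
      else (n1 - i) * n2 + snake_offset n2 i j + lab_shift n1 n2)"
  unfolding lab_def snake_offset_def lab_shift_def Let_def by auto

lemma odd_lab_iff:
  assumes "i \<in> {1..n1}" "j \<in> {1..n2}"
  shows "odd (lab n1 n2 (i, j)) \<longleftrightarrow> even (i + j)"
  using assms unfolding lab_eq_snake snake_offset_def lab_shift_def
  by (auto simp: even_mult_iff)

lemma snake_offset_bounds: "j \<in> {1..n2} \<Longrightarrow> snake_offset n2 i j \<in> {1..n2}"
  unfolding snake_offset_def by auto

lemma snake_offset_inj:
  assumes "j \<in> {1..n2}" "j' \<in> {1..n2}" "even i = even i'"
    and "snake_offset n2 i j = snake_offset n2 i' j'"
  shows "j = j'"
  using assms unfolding snake_offset_def by (auto split: if_splits)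

lemma mult_add_eq_mult_add_cancel:
  fixes n :: nat
  assumes "q * n + r = q' * n + r'" "r \<in> {1..n}" "r' \<in> {1..n}"
  shows "q = q' \<and> r = r'"
proof -
  obtain x x' where x: "r = Suc x" "r' = Suc x'" "x < n" "x' < n"
    using assms(2,3) by (cases r; cases r') auto
  then have "x + q * n = x' + q' * n"
    using assms(1) by simp
  moreover have "(x + q * n) div n = q" "(x + q * n) mod n = x"
    "(x' + q' * n) div n = q'" "(x' + q' * n) mod n = x'"
    using x(3,4) by simp_all
  ultimately have "q = q'" "x = x'"
    by metis+
  then show ?thesis
    using x by simp
qed

lemma mult_add_le_mult:
  fixes k m n s :: nat
  assumes "k < m" "s \<le> n"
  shows "k * n + s \<le> m * n"
proof -
  have "k * n + s \<le> Suc k * n" using assms(2) by simp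
  also have "\<dots> \<le> m * n" using assms(1) by (intro mult_le_mono1) simp
  finally show ?thesis .
qed

lemma lab_injective:
  assumes ij: "(i, j) \<in> {1..n1} \<times> {1..n2}" and ij': "(i', j') \<in> {1..n1} \<times> {1..n2}"
    and eq: "lab n1 n2 (i, j) = lab n1 n2 (i', j')"
  shows "i = i' \<and> j = j'"
proof -
  have parity: "even (i + j) = even (i' + j')"
    using eq odd_lab_iff[of i n1 j n2] odd_lab_iff[of i' n1 j' n2] ij ij' by auto
  let ?s = "snake_offset n2 i j" and ?s' = "snake_offset n2 i' j'"
  have s: "?s \<in> {1..n2}" "?s' \<in> {1..n2}"
    using ij ij' snake_offset_bounds by auto
  show ?thesis
  proof (cases "even (i + j)")
    case True
    then have "(i - 1) * n2 + ?s = (i' - 1) * n2 + ?s'"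
      using eq parity by (simp add: lab_eq_snake)
    then have "i - 1 = i' - 1" "?s = ?s'"
      using mult_add_eq_mult_add_cancel s by blast+
    moreover from this have "i = i'"
      using ij ij' by auto
    ultimately show ?thesis
      using ij ij' snake_offset_inj[of j n2 j' i i'] by auto
  next
    case False
    then have "(n1 - i) * n2 + ?s = (n1 - i') * n2 + ?s'"
      using eq parity by (simp add: lab_eq_snake)
    then have "n1 - i = n1 - i'" "?s = ?s'"
      using mult_add_eq_mult_add_cancel s by blast+
    moreover from this have "i = i'"
      using ij ij' by auto
    ultimately show ?thesis
      using ij ij' snake_offset_inj[of j n2 j' i i'] by auto
  qed
qed

lemma lab_inj_on: "inj_on (lab n1 n2) ({1..n1} \<times> {1..n2})"
  using lab_injective by (fastforce simp: inj_on_def)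

lemma lab_range:
  assumes "(i, j) \<in> {1..n1} \<times> {1..n2}"
  shows "lab n1 n2 (i, j) \<in> {1..n1 * n2}"
proof -
  have s: "snake_offset n2 i j \<in> {1..n2}"
    using assms snake_offset_bounds by auto
  show ?thesis
  proof (cases "even (i + j)")
    case True
    then show ?thesis
      using assms s mult_add_le_mult[of "i - 1" n1 "snake_offset n2 i j" n2]
      by (auto simp: lab_eq_snake)
  next
    case False
    have "(n1 - i) * n2 + snake_offset n2 i j \<le> n1 * n2"
      using assms s by (intro mult_add_le_mult) auto
    then have "lab n1 n2 (i, j) \<le> n1 * n2 + lab_shift n1 n2"
      using False by (simp add: lab_eq_snake)
    moreover have "even (lab n1 n2 (i, j))"
      using False assms odd_lab_iff by blast
    moreover have "lab_shift n1 n2 = 1 \<Longrightarrow> odd (n1 * n2 + 1)"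
      unfolding lab_shift_def by (auto split: if_splits)
    ultimately have "lab n1 n2 (i, j) \<le> n1 * n2"
      unfolding lab_shift_def by (cases "lab n1 n2 (i, j) = n1 * n2 + 1") (auto split: if_splits)
    then show ?thesis
      using False s by (auto simp: lab_eq_snake)
  qed
qed

lemma lab_bij_betw: "bij_betw (lab n1 n2) ({1..n1} \<times> {1..n2}) {1..n1 * n2}"
proof -
  have "lab n1 n2 ` ({1..n1} \<times> {1..n2}) \<subseteq> {1..n1 * n2}"
    using lab_range by auto
  moreover have "card (lab n1 n2 ` ({1..n1} \<times> {1..n2})) = card {1..n1 * n2}"
    using lab_inj_on by (simp add: card_image card_cartesian_product)
  ultimately show ?thesis
    using lab_inj_on by (simp add: bij_betw_def card_subset_eq)
qed

definition unit_square :: "nat \<Rightarrow> nat \<Rightarrow> (nat \<times> nat) set" where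
  "unit_square p q = {(p, q), (Suc p, q), (Suc p, Suc q), (p, Suc q)}"

lemma unit_square_eq_Times: "unit_square p q = {p, Suc p} \<times> {q, Suc q}"
  unfolding unit_square_def by auto

lemma of_nat_lab:
  assumes "i \<in> {1..n1}" "j \<in> {1..n2}"
  shows "int (lab n1 n2 (i, j)) =
    (if even (i + j) then (int i - 1) * int n2 + (if odd i then int j else int n2 + 1 - int j)
     else (int n1 - int i) * int n2 + (if odd i then int j else int n2 + 1 - int j)
       + int (lab_shift n1 n2))"
  using assms unfolding lab_eq_snake snake_offset_def by (simp add: of_nat_diff)

lemma lab_unit_square_sum:
  assumes "1 \<le> p" "p < n1" "1 \<le> q" "q < n2"
  shows "(\<Sum>v \<in> unit_square p q. lab n1 n2 v) = 2 * (n1 * n2 + 1 + lab_shift n1 n2)"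
proof -
  have "int (\<Sum>v \<in> unit_square p q. lab n1 n2 v) = int (lab n1 n2 (p, q)) + int (lab n1 n2 (Suc p, q))
      + int (lab n1 n2 (Suc p, Suc q)) + int (lab n1 n2 (p, Suc q))"
    unfolding unit_square_def by simp
  also have "\<dots> = 2 * (int n1 * int n2 + 1 + int (lab_shift n1 n2))"
    using assms by (simp add: of_nat_lab) (cases "even p"; cases "even q"; simp add: algebra_simps)
  also have "\<dots> = int (2 * (n1 * n2 + 1 + lab_shift n1 n2))"
    by simp
  finally show ?thesis
    by (simp only: of_nat_eq_iff)
qed

definition grid_adj :: "nat \<times> nat \<Rightarrow> nat \<times> nat \<Rightarrow> bool" where
  "grid_adj u v \<longleftrightarrow> \<bar>int (fst u) - int (fst v)\<bar> + \<bar>int (snd u) - int (snd v)\<bar> = 1"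

lemma grid_adj_if_edge: "{u, v} \<in> snd (grid n1 n2) \<Longrightarrow> grid_adj u v"
  unfolding grid_def grid_adj_def by (auto simp: doubleton_eq_iff abs_minus_commute)

lemma taxicab_four_cycle:
  fixes xa ya xb yb xc yc xd yd :: int
  assumes "\<bar>xa - xb\<bar> + \<bar>ya - yb\<bar> = 1" "\<bar>xb - xc\<bar> + \<bar>yb - yc\<bar> = 1"
    "\<bar>xc - xd\<bar> + \<bar>yc - yd\<bar> = 1" "\<bar>xd - xa\<bar> + \<bar>yd - ya\<bar> = 1"
    "(xa, ya) \<noteq> (xc, yc)" "(xb, yb) \<noteq> (xd, yd)"
  shows "\<bar>xa - xc\<bar> = 1 \<and> \<bar>ya - yc\<bar> = 1 \<and> (xb = xa \<or> xb = xc) \<and> (yb = ya \<or> yb = yc)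
    \<and> (xd = xa \<or> xd = xc) \<and> (yd = ya \<or> yd = yc)"
  using assms by smt

lemma between_unit_distance:
  fixes x a c :: nat
  assumes "\<bar>int a - int c\<bar> = 1" "x = a \<or> x = c"
  shows "x \<in> {min a c, Suc (min a c)}"
  using assms by (auto simp: min_def)

lemma four_cycle_in_unit_square:
  assumes "grid_adj a b" "grid_adj b c" "grid_adj c d" "grid_adj d a" "a \<noteq> c" "b \<noteq> d"
  shows "{a, b, c, d} \<subseteq> unit_square (min (fst a) (fst c)) (min (snd a) (snd c))"
proof -
  have coords: "\<bar>int (fst a) - int (fst c)\<bar> = 1 \<and> \<bar>int (snd a) - int (snd c)\<bar> = 1
    \<and> (fst b = fst a \<or> fst b = fst c) \<and> (snd b = snd a \<or> snd b = snd c)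
    \<and> (fst d = fst a \<or> fst d = fst c) \<and> (snd d = snd a \<or> snd d = snd c)"
    using taxicab_four_cycle[where xa = "int (fst a)" and ya = "int (snd a)"
        and xb = "int (fst b)" and yb = "int (snd b)" and xc = "int (fst c)" and yc = "int (snd c)"
        and xd = "int (fst d)" and yd = "int (snd d)"] assms
    unfolding grid_adj_def prod_eq_iff by simp
  have "fst v \<in> {min (fst a) (fst c), Suc (min (fst a) (fst c))}
      \<and> snd v \<in> {min (snd a) (snd c), Suc (min (snd a) (snd c))}" if "v \<in> {a, b, c, d}" for v
  proof -
    have "(fst v = fst a \<or> fst v = fst c) \<and> (snd v = snd a \<or> snd v = snd c)"
      using that coords by auto
    then show ?thesis
      using coords between_unit_distance[of "fst a" "fst c" "fst v"]
        between_unit_distance[of "snd a" "snd c" "snd v"] by blast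
  qed
  then show ?thesis
    unfolding unit_square_eq_Times subset_iff mem_Times_iff by blast
qed

lemma Q2_vertices: "fst Q2 = unit_square 1 1"
  unfolding Q2_def grid_def unit_square_def by auto

lemma Q2_cycle_edges: "{(1, 1), (2, 1)} \<in> snd Q2" "{(2, 1), (2, 2)} \<in> snd Q2"
  "{(2, 2), (1, 2)} \<in> snd Q2" "{(1, 2), (1, 1)} \<in> snd Q2"
  unfolding Q2_def grid_def by force+

lemma graph_iso_Q2_four_cycle:
  assumes "graph_iso H Q2"
  obtains a b c d where "fst H = {a, b, c, d}" "distinct [a, b, c, d]"
    "{a, b} \<in> snd H" "{b, c} \<in> snd H" "{c, d} \<in> snd H" "{d, a} \<in> snd H"
proof -
  obtain h where h: "bij_betw h (fst H) (fst Q2)"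
    and edges: "\<forall>x \<in> fst H. \<forall>y \<in> fst H. {x, y} \<in> snd H \<longleftrightarrow> {h x, h y} \<in> snd Q2"
    using assms unfolding graph_iso_def by blast
  let ?g = "inv_into (fst H) h"
  have g: "bij_betw ?g (unit_square 1 1) (fst H)"
    using h bij_betw_inv_into Q2_vertices by metis
  have hg: "h (?g v) = v" if "v \<in> unit_square 1 1" for v
    using h that Q2_vertices by (simp add: bij_betw_inv_into_right)
  have gH: "?g v \<in> fst H" if "v \<in> unit_square 1 1" for v
    using g that by (meson bij_betwE)
  have "?g ` unit_square 1 1 = fst H"
    using g by (simp add: bij_betw_def)
  moreover have "distinct (map ?g [(1, 1), (2, 1), (2, 2), (1, 2)])"
    using g unfolding bij_betw_def unit_square_def
    by (simp add: distinct_map numeral_2_eq_2)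
  moreover have "{?g u, ?g v} \<in> snd H"
    if "{u, v} \<in> snd Q2" "u \<in> unit_square 1 1" "v \<in> unit_square 1 1" for u v
    using edges gH hg that by simp
  ultimately show ?thesis
    using that[of "?g (1, 1)" "?g (2, 1)" "?g (2, 2)" "?g (1, 2)"] Q2_cycle_edges
    unfolding unit_square_def by (simp add: numeral_2_eq_2)
qed

lemma Q2_subgraph_of_grid_is_unit_square:
  assumes "subgraph H (grid n1 n2)" "graph_iso H Q2"
  obtains p q where "1 \<le> p" "p < n1" "1 \<le> q" "q < n2" "fst H = unit_square p q"
proof -
  obtain a b c d where V: "fst H = {a, b, c, d}" and distinct: "distinct [a, b, c, d]"
    and edges: "{a, b} \<in> snd H" "{b, c} \<in> snd H" "{c, d} \<in> snd H" "{d, a} \<in> snd H"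
    using assms(2) by (rule graph_iso_Q2_four_cycle)
  have "snd H \<subseteq> snd (grid n1 n2)"
    using assms(1) unfolding subgraph_def by blast
  then have adj: "grid_adj a b" "grid_adj b c" "grid_adj c d" "grid_adj d a"
    using edges grid_adj_if_edge by blast+
  define p q where "p = min (fst a) (fst c)" and "q = min (snd a) (snd c)"
  have "fst H \<subseteq> unit_square p q"
    using four_cycle_in_unit_square[OF adj] distinct V unfolding p_def q_def by simp
  moreover have "card (unit_square p q) = card (fst H)"
    using V distinct by (simp add: unit_square_def)
  ultimately have square: "fst H = unit_square p q"
    by (simp add: card_subset_eq unit_square_def)
  moreover have "unit_square p q \<subseteq> {1..n1} \<times> {1..n2}"
    using square assms(1) unfolding subgraph_def grid_def by simp
  ultimately show ?thesis
    using that by (auto simp: unit_square_def)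
qed

theorem lemma3:
  fixes n1 n2 :: nat
  assumes "n1 \<ge> n2" and "n2 \<ge> 2"
  shows "magic_labeling (grid n1 n2) Q2 (lab n1 n2)
           (if odd n1 \<or> even n2 then 2 * (n1 * n2 + 1) else 2 * (n1 * n2 + 2))"
  unfolding magic_labeling_def
proof (intro conjI allI impI)
  have "fst (grid n1 n2) = {1..n1} \<times> {1..n2}"
    by (simp add: grid_def)
  then show "bij_betw (lab n1 n2) (fst (grid n1 n2)) {1..card (fst (grid n1 n2))}"
    using lab_bij_betw by (simp add: card_cartesian_product)
next
  fix H assume "subgraph H (grid n1 n2) \<and> graph_iso H Q2"
  then obtain p q where "1 \<le> p" "p < n1" "1 \<le> q" "q < n2" "fst H = unit_square p q"
    using Q2_subgraph_of_grid_is_unit_square by blast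
  then show "(\<Sum>v \<in> fst H. lab n1 n2 v) =
      (if odd n1 \<or> even n2 then 2 * (n1 * n2 + 1) else 2 * (n1 * n2 + 2))"
    using lab_unit_square_sum by (simp add: lab_shift_def)
qed

end
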